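(* Protocol P1 (described in the context) perfectly constructs (i.e. $0$-constructs) the Single-Plane Remote State Preparation resource SP-RSP from one use of the Remote Rotation with Dephasing resource $\mathrm{RR}_\mathrm{D}$, in the Abstract Cryptography framework.
   Context: Notation: $\Theta=\{k\pi/4 : k=0,\dots,7\}$; for $\theta\in\Theta$, $|+_\theta\rangle=(|0\rangle+e^{i\theta}|1\rangle)/\sqrt2$; $R_Z(\theta)=\mathrm{diag}(1,e^{i\theta})$ (so $R_Z(\theta)|+\rangle=|+_\theta\rangle$); $X$ is the Pauli bit flip. For a map $C$ and state $\rho$, $C(\rho)$ denotes $C\rho C^\dagger$. Abstract Cryptography (AC) framework (two parties: a Sender, always assumed honest, and a Receiver). A resource is a system with an interface for each party which receives (classical or quantum) inputs at its interfaces, applies a specified CPTP map, and returns outputs at interfaces; a filtered interface is one accessible only to a dishonest party. A protocol $\pi=(\pi_S,\pi_R)$ consists of converters (sequences of CPTP maps describing the honest parties' actions) plugged into the interfaces of the available resource $\mathcal R$, giving a new resource $\pi\mathcal R$. A distinguisher is an unbounded system that interacts with all outer interfaces of a resource (adaptively) and outputs a bit. Two resources $\mathcal R_1,\mathcal R_2$ with the same interfaces are $\epsilon$-indistinguishable, $\mathcal R_1\approx_\epsilon\mathcal R_2$, if for every distinguisher $\mathcal D$, $|\Pr[\mathcal D\mathcal R_1=1]-\Pr[\mathcal D\mathcal R_2=1]|\le\epsilon$. A protocol $\pi$ $\epsilon$-constructs resource $\mathcal S$ from resource $\mathcal R$ if (1) correctness: $\pi\mathcal R\approx_\epsilon\mathcal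 S$, and (2) security against a malicious Receiver: there exists a converter (simulator) $\sigma$ plugged into the Receiver's interface of $\mathcal S$ such that $\pi_S\mathcal R\approx_\epsilon \mathcal S\sigma$. "Perfectly constructs" means $\epsilon=0$. Resource SP-RSP: the Sender inputs $\theta\in\Theta$; the resource sends a qubit in state $|+_\theta\rangle$ to the Receiver. Resource $\mathrm{RR}_\mathrm{D}$: the Sender inputs $\theta\in\Theta$; the Receiver inputs a single qubit in state $\rho$; the resource samples $b\in\{0,1\}$ uniformly at random and outputs the qubit $R_Z(\theta)X^b(\rho)$ to the Receiver. Protocol P1: the Sender inputs $\theta$ into $\mathrm{RR}_\mathrm{D}$; the honest Receiver inputs a qubit in state $|+\rangle$ into $\mathrm{RR}_\mathrm{D}$ and sets the qubit returned by $\mathrm{RR}_\mathrm{D}$ as its output. *)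

theory Defs
  imports Complex_Main
begin

text \<open>Operators are complex matrices
represented as functions of two indices; every operation that sums over an
index is given the relevant (finite) index set explicitly.
Qubit basis: False = |0>, True = |1>.\<close>

type_synonym 'i qop = "'i \<Rightarrow> 'i \<Rightarrow> complex"

definition mmul :: "'j set \<Rightarrow> ('i \<Rightarrow> 'j \<Rightarrow> complex) \<Rightarrow> ('j \<Rightarrow> 'k \<Rightarrow> complex) \<Rightarrow> 'i \<Rightarrow> 'k \<Rightarrow> complex" where
  "mmul J A B i k = (\<Sum>j\<in>J. A i j * B j k)"

definition adj :: "('i \<Rightarrow> 'j \<Rightarrow> complex) \<Rightarrow> 'j \<Rightarrow> 'i \<Rightarrow> complex" where
  "adj A j i = cnj (A i j)"

definition idm :: "'i qop" where
  "idm i j = (if i = j then 1 else 0)"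

definition conj_by :: "'j set \<Rightarrow> ('i \<Rightarrow> 'j \<Rightarrow> complex) \<Rightarrow> 'j qop \<Rightarrow> 'i qop" where
  "conj_by J C \<rho> = mmul J (mmul J C \<rho>) (adj C)"

definition kron :: "('a \<Rightarrow> 'b \<Rightarrow> complex) \<Rightarrow> ('c \<Rightarrow> 'd \<Rightarrow> complex) \<Rightarrow> ('a \<times> 'c) \<Rightarrow> ('b \<times> 'd) \<Rightarrow> complex" where
  "kron A B x y = A (fst x) (fst y) * B (snd x) (snd y)"

definition proj :: "('i \<Rightarrow> complex) \<Rightarrow> 'i qop" where
  "proj v i j = v i * cnj (v j)"

definition trace :: "'i set \<Rightarrow> 'i qop \<Rightarrow> complex" where
  "trace I A = (\<Sum>i\<in>I. A i i)"

definition psd :: "'i set \<Rightarrow> 'i qop \<Rightarrow> bool" where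
  "psd I A \<longleftrightarrow> (\<forall>v. Im (\<Sum>i\<in>I. \<Sum>j\<in>I. cnj (v i) * A i j * v j) = 0
                 \<and> Re (\<Sum>i\<in>I. \<Sum>j\<in>I. cnj (v i) * A i j * v j) \<ge> 0)"

definition supported :: "'i set \<Rightarrow> 'i qop \<Rightarrow> bool" where
  "supported I A \<longleftrightarrow> (\<forall>i j. i \<notin> I \<or> j \<notin> I \<longrightarrow> A i j = 0)"

definition effect :: "'i set \<Rightarrow> 'i qop \<Rightarrow> bool" where
  "effect I M \<longleftrightarrow> psd I M \<and> psd I (\<lambda>i j. idm i j - M i j)"

definition kraus_cptp :: "(bool \<Rightarrow> (bool \<times> bool) \<Rightarrow> complex) list \<Rightarrow> bool" where
  "kraus_cptp ks \<longleftrightarrow> (\<forall>x y. (\<Sum>K\<leftarrow>ks. \<Sum>z\<in>UNIV. cnj (K z x) * K z y) = idm x y)"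

definition Theta :: "real set" where
  "Theta = {real k * pi / 4 | k. k < (8::nat)}"

definition ket_plus_theta :: "real \<Rightarrow> bool \<Rightarrow> complex" where
  "ket_plus_theta \<theta> b = (if b then exp (\<i> * complex_of_real \<theta>) else 1) / complex_of_real (sqrt 2)"

definition ket_plus :: "bool \<Rightarrow> complex" where
  "ket_plus b = 1 / complex_of_real (sqrt 2)"

definition RZ :: "real \<Rightarrow> bool qop" where
  "RZ \<theta> a b = (if a = b then (if a then exp (\<i> * complex_of_real \<theta>) else 1) else 0)"

definition PauliX :: "bool qop" where
  "PauliX a b = (if a \<noteq> b then 1 else 0)"

definition Xpow :: "bool \<Rightarrow> bool qop" where
  "Xpow b = (if b then PauliX else idm)"

text \<open>A distinguisher keeps an n-dimensional reference system (index in {..<n}).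
Joint states of a qubit and the reference are indexed by bool x nat, supported on Ix n.\<close>
definition Ix :: "nat \<Rightarrow> (bool \<times> nat) set" where
  "Ix n = (UNIV :: bool set) \<times> {..<n}"

text \<open>RR_D: Sender inputs theta; Receiver inputs qubit rho (possibly entangled with
the reference); output (R_Z(theta) X^b)(rho) with b uniform, i.e. the average over b.\<close>
definition RRD_out :: "real \<Rightarrow> nat \<Rightarrow> (bool \<times> nat) qop \<Rightarrow> (bool \<times> nat) qop" where
  "RRD_out \<theta> n \<rho> x y =
     (\<Sum>b\<in>(UNIV::bool set). (1/2) * conj_by (Ix n) (kron (mmul UNIV (RZ \<theta>) (Xpow b)) idm) \<rho> x y)"

text \<open>Protocol P1 plugged into RR_D (pi R): the honest receiver inputs |+><+|;
the distinguisher only holds its reference state tau at the receiver side.\<close>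
definition P1_RRD :: "real \<Rightarrow> nat \<Rightarrow> nat qop \<Rightarrow> (bool \<times> nat) qop" where
  "P1_RRD \<theta> n \<tau> = RRD_out \<theta> n (kron (proj ket_plus) \<tau>)"

definition SPRSP :: "real \<Rightarrow> nat \<Rightarrow> nat qop \<Rightarrow> (bool \<times> nat) qop" where
  "SPRSP \<theta> n \<tau> = kron (proj (ket_plus_theta \<theta>)) \<tau>"

text \<open>pi_S RR_D: the honest sender just forwards theta; the receiver interface is open.\<close>
definition piS_RRD :: "real \<Rightarrow> nat \<Rightarrow> (bool \<times> nat) qop \<Rightarrow> (bool \<times> nat) qop" where
  "piS_RRD \<theta> n \<rho> = RRD_out \<theta> n \<rho>"

text \<open>SP-RSP with simulator sigma (Kraus list ks) at the Receiver interface: sigma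
receives the qubit |+_theta> from SP-RSP and the qubit input of the distinguisher
and outputs one qubit.  Input index ((p,a),r): p = SP-RSP qubit, a = input qubit,
r = reference.\<close>
definition sp_join :: "real \<Rightarrow> (bool \<times> nat) qop \<Rightarrow> ((bool \<times> bool) \<times> nat) qop" where
  "sp_join \<theta> \<rho> x y = proj (ket_plus_theta \<theta>) (fst (fst x)) (fst (fst y))
                      * \<rho> (snd (fst x), snd x) (snd (fst y), snd y)"

definition SPRSP_sim :: "(bool \<Rightarrow> (bool \<times> bool) \<Rightarrow> complex) list \<Rightarrow> real \<Rightarrow> nat
                         \<Rightarrow> (bool \<times> nat) qop \<Rightarrow> (bool \<times> nat) qop" where
  "SPRSP_sim ks \<theta> n \<rho> x y =
     (\<Sum>K\<leftarrow>ks. conj_by ((UNIV \<times> UNIV) \<times> {..<n}) (kron K idm) (sp_join \<theta> \<rho>) x y)"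

text \<open>Distinguisher when the Receiver interface only outputs (correctness):
it picks theta in Theta with probability tr(tau_theta) while its reference is
in state tau_theta / tr(tau_theta); after receiving the qubit it measures the
qubit and reference (and its classical copy of theta) with effect M_theta.\<close>
definition dist_out :: "nat \<Rightarrow> (real \<Rightarrow> nat qop) \<Rightarrow> (real \<Rightarrow> (bool \<times> nat) qop) \<Rightarrow> bool" where
  "dist_out n \<tau>s Ms \<longleftrightarrow>
     (\<forall>\<theta>\<in>Theta. psd {..<n} (\<tau>s \<theta>) \<and> supported {..<n} (\<tau>s \<theta>) \<and> effect (Ix n) (Ms \<theta>))
     \<and> (\<Sum>\<theta>\<in>Theta. trace {..<n} (\<tau>s \<theta>)) = 1"

definition prob_out :: "(real \<Rightarrow> nat \<Rightarrow> nat qop \<Rightarrow> (bool \<times> nat) qop)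
                         \<Rightarrow> nat \<Rightarrow> (real \<Rightarrow> nat qop) \<Rightarrow> (real \<Rightarrow> (bool \<times> nat) qop) \<Rightarrow> real" where
  "prob_out R n \<tau>s Ms = Re (\<Sum>\<theta>\<in>Theta. trace (Ix n) (mmul (Ix n) (Ms \<theta>) (R \<theta> n (\<tau>s \<theta>))))"

definition indist_out :: "real \<Rightarrow> (real \<Rightarrow> nat \<Rightarrow> nat qop \<Rightarrow> (bool \<times> nat) qop)
                          \<Rightarrow> (real \<Rightarrow> nat \<Rightarrow> nat qop \<Rightarrow> (bool \<times> nat) qop) \<Rightarrow> bool" where
  "indist_out \<epsilon> R1 R2 \<longleftrightarrow>
     (\<forall>n \<tau>s Ms. dist_out n \<tau>s Ms \<longrightarrow> \<bar>prob_out R1 n \<tau>s Ms - prob_out R2 n \<tau>s Ms\<bar> \<le> \<epsilon>)"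

text \<open>Distinguisher when the Receiver interface takes a qubit input and returns a qubit
(security): for each theta a subnormalised joint state rho_theta of the input qubit and
reference (total trace over Theta = 1), and an effect M_theta on output qubit + reference.\<close>
definition dist_io :: "nat \<Rightarrow> (real \<Rightarrow> (bool \<times> nat) qop) \<Rightarrow> (real \<Rightarrow> (bool \<times> nat) qop) \<Rightarrow> bool" where
  "dist_io n \<rho>s Ms \<longleftrightarrow>
     (\<forall>\<theta>\<in>Theta. psd (Ix n) (\<rho>s \<theta>) \<and> supported (Ix n) (\<rho>s \<theta>) \<and> effect (Ix n) (Ms \<theta>))
     \<and> (\<Sum>\<theta>\<in>Theta. trace (Ix n) (\<rho>s \<theta>)) = 1"

definition prob_io :: "(real \<Rightarrow> nat \<Rightarrow> (bool \<times> nat) qop \<Rightarrow> (bool \<times> nat) qop)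
                         \<Rightarrow> nat \<Rightarrow> (real \<Rightarrow> (bool \<times> nat) qop) \<Rightarrow> (real \<Rightarrow> (bool \<times> nat) qop) \<Rightarrow> real" where
  "prob_io R n \<rho>s Ms = Re (\<Sum>\<theta>\<in>Theta. trace (Ix n) (mmul (Ix n) (Ms \<theta>) (R \<theta> n (\<rho>s \<theta>))))"

definition indist_io :: "real \<Rightarrow> (real \<Rightarrow> nat \<Rightarrow> (bool \<times> nat) qop \<Rightarrow> (bool \<times> nat) qop)
                          \<Rightarrow> (real \<Rightarrow> nat \<Rightarrow> (bool \<times> nat) qop \<Rightarrow> (bool \<times> nat) qop) \<Rightarrow> bool" where
  "indist_io \<epsilon> R1 R2 \<longleftrightarrow>
     (\<forall>n \<rho>s Ms. dist_io n \<rho>s Ms \<longrightarrow> \<bar>prob_io R1 n \<rho>s Ms - prob_io R2 n \<rho>s Ms\<bar> \<le> \<epsilon>)"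

end

theory Submission
  imports Defs
begin

text \<open>Since \<open>X |+> = |+>\<close>, the dephasing in \<open>RR\<^sub>D\<close> does nothing to the honest input
and P1 outputs \<open>R\<^sub>Z(\<theta>)|+> = |+\<^sub>\<theta>>\<close>.  For a dishonest receiver, averaging over \<open>X\<^sup>b\<close> is
the dephasing in the \<open>{|+>, |->}\<close> basis, so \<open>RR\<^sub>D\<close> measures the input qubit in that basis
and, on outcome \<open>s\<close>, outputs \<open>R\<^sub>Z(\<theta>) Z\<^sup>s|+> = Z\<^sup>s|+\<^sub>\<theta>>\<close>.  The simulator does exactly this: it measures the
receiver's qubit in the \<open>X\<close> basis and applies \<open>Z\<^sup>s\<close> to the qubit \<open>|+\<^sub>\<theta>>\<close> it obtains
from SP-RSP.  Both sides then agree entrywise, so no distinguisher can tell them apart.\<close>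

lemma mmul_kron_idm_left:
  assumes "finite R" "r \<in> R"
  shows "mmul (A \<times> R) (kron U idm) \<rho> (a, r) k = (\<Sum>c\<in>A. U a c * \<rho> (c, r) k)"
proof -
  have "mmul (A \<times> R) (kron U idm) \<rho> (a, r) k
      = (\<Sum>c\<in>A. \<Sum>j\<in>R. if r = j then U a c * \<rho> (c, j) k else 0)"
    unfolding mmul_def sum.cartesian_product' kron_def idm_def
    by (intro sum.cong refl) auto
  then show ?thesis
    using assms by simp
qed

lemma mmul_adj_kron_idm_right:
  assumes "finite R" "r \<in> R"
  shows "mmul (A \<times> R) B (adj (kron U idm)) i (a, r) = (\<Sum>c\<in>A. B i (c, r) * cnj (U a c))"
proof -
  have "mmul (A \<times> R) B (adj (kron U idm)) i (a, r)
      = (\<Sum>c\<in>A. \<Sum>j\<in>R. if r = j then B i (c, j) * cnj (U a c) else 0)"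
    unfolding mmul_def sum.cartesian_product' kron_def idm_def adj_def
    by (intro sum.cong refl) auto
  then show ?thesis
    using assms by simp
qed

lemma conj_by_kron_idm:
  assumes "finite R" "r \<in> R" "r' \<in> R"
  shows "conj_by (A \<times> R) (kron U idm) \<rho> (a, r) (a', r') =
     (\<Sum>c\<in>A. \<Sum>c'\<in>A. U a c * \<rho> (c, r) (c', r') * cnj (U a' c'))"
  unfolding conj_by_def mmul_adj_kron_idm_right[OF assms(1,3)] mmul_kron_idm_left[OF assms(1,2)]
  by (subst sum.swap) (simp add: sum_distrib_right sum_distrib_left mult.assoc)

lemma trace_mmul_cong_Ix:
  assumes "\<And>a r a' r'. r < n \<Longrightarrow> r' < n \<Longrightarrow> A (a, r) (a', r') = B (a, r) (a', r')"
  shows "trace (Ix n) (mmul (Ix n) M A) = trace (Ix n) (mmul (Ix n) M B)"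
  unfolding trace_def mmul_def by (intro sum.cong refl) (auto simp: Ix_def assms)

lemma indist_out_0_if_eq_on_Ix:
  assumes "\<And>\<theta> n \<tau> a r a' r'. r < n \<Longrightarrow> r' < n \<Longrightarrow>
             R1 \<theta> n \<tau> (a, r) (a', r') = R2 \<theta> n \<tau> (a, r) (a', r')"
  shows "indist_out 0 R1 R2"
proof -
  have "trace (Ix n) (mmul (Ix n) M (R1 \<theta> n \<tau>)) = trace (Ix n) (mmul (Ix n) M (R2 \<theta> n \<tau>))"
    for \<theta> n \<tau> M
    by (rule trace_mmul_cong_Ix) (rule assms)
  then show ?thesis
    unfolding indist_out_def prob_out_def by simp
qed

lemma indist_io_0_if_eq_on_Ix:
  assumes "\<And>\<theta> n \<rho> a r a' r'. r < n \<Longrightarrow> r' < n \<Longrightarrow>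
             R1 \<theta> n \<rho> (a, r) (a', r') = R2 \<theta> n \<rho> (a, r) (a', r')"
  shows "indist_io 0 R1 R2"
proof -
  have "trace (Ix n) (mmul (Ix n) M (R1 \<theta> n \<rho>)) = trace (Ix n) (mmul (Ix n) M (R2 \<theta> n \<rho>))"
    for \<theta> n \<rho> M
    by (rule trace_mmul_cong_Ix) (rule assms)
  then show ?thesis
    unfolding indist_io_def prob_io_def by simp
qed

definition rz_phase :: "real \<Rightarrow> bool \<Rightarrow> complex" where
  "rz_phase \<theta> a = (if a then exp (\<i> * complex_of_real \<theta>) else 1)"

definition rotate_dephased :: "real \<Rightarrow> (bool \<times> 'r) qop \<Rightarrow> (bool \<times> 'r) qop" where
  "rotate_dephased \<theta> \<rho> x y =
     1/2 * rz_phase \<theta> (fst x) * cnj (rz_phase \<theta> (fst y))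
       * (\<rho> x y + \<rho> (\<not> fst x, snd x) (\<not> fst y, snd y))"

lemma RRD_out_eq_rotate_dephased:
  assumes "r < n" "r' < n"
  shows "RRD_out \<theta> n \<rho> (a, r) (a', r') = rotate_dephased \<theta> \<rho> (a, r) (a', r')"
  using assms
  unfolding RRD_out_def rotate_dephased_def Ix_def
  by (cases a; cases a')
     (simp_all add: conj_by_kron_idm UNIV_bool mmul_def RZ_def Xpow_def PauliX_def idm_def rz_phase_def algebra_simps)

lemma sqrt2_complex:
  "cnj (complex_of_real (sqrt 2)) = complex_of_real (sqrt 2)"
  "complex_of_real (sqrt 2) * complex_of_real (sqrt 2) = 2"
  by (simp_all flip: of_real_mult)

lemma rotate_dephased_plus:
  "rotate_dephased \<theta> (kron (proj ket_plus) \<tau>) = kron (proj (ket_plus_theta \<theta>)) \<tau>"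
  by (intro ext)
     (simp add: rotate_dephased_def kron_def proj_def ket_plus_def ket_plus_theta_def
        rz_phase_def sqrt2_complex divide_simps)

text \<open>Kraus operator \<open>Z\<^sup>s \<otimes> <\<plusminus>|\<close> on (SP-RSP qubit, receiver qubit): measurement of the
receiver's qubit in the \<open>X\<close> basis with outcome \<open>s\<close>, followed by \<open>Z\<^sup>s\<close> on \<open>|+\<^sub>\<theta>>\<close>.\<close>
definition xmeas_kraus :: "bool \<Rightarrow> bool \<Rightarrow> bool \<times> bool \<Rightarrow> complex" where
  "xmeas_kraus s z pa = (if z = fst pa then (if s \<and> fst pa then -1 else 1) else 0)
       * (if s \<and> snd pa then -1 else 1) / complex_of_real (sqrt 2)"

lemma kraus_cptp_xmeas: "kraus_cptp [xmeas_kraus False, xmeas_kraus True]"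
  unfolding kraus_cptp_def
  by (auto simp: UNIV_bool xmeas_kraus_def idm_def sqrt2_complex divide_simps)

lemma SPRSP_sim_xmeas_eq_rotate_dephased:
  assumes "r < n" "r' < n"
  shows "SPRSP_sim [xmeas_kraus False, xmeas_kraus True] \<theta> n \<rho> (a, r) (a', r')
       = rotate_dephased \<theta> \<rho> (a, r) (a', r')"
  using assms
  unfolding SPRSP_sim_def rotate_dephased_def
  by (cases a; cases a')
     (simp_all add: conj_by_kron_idm UNIV_bool sp_join_def proj_def ket_plus_theta_def xmeas_kraus_def
        rz_phase_def algebra_simps sqrt2_complex divide_simps)

theorem theorem1:
  shows "indist_out 0 P1_RRD SPRSP \<and>
         (\<exists>ks. kraus_cptp ks \<and> indist_io 0 piS_RRD (SPRSP_sim ks))"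
proof
  show "indist_out 0 P1_RRD SPRSP"
    by (rule indist_out_0_if_eq_on_Ix)
       (simp add: P1_RRD_def SPRSP_def RRD_out_eq_rotate_dephased rotate_dephased_plus)
  have "indist_io 0 piS_RRD (SPRSP_sim [xmeas_kraus False, xmeas_kraus True])"
    by (rule indist_io_0_if_eq_on_Ix)
       (simp add: piS_RRD_def RRD_out_eq_rotate_dephased SPRSP_sim_xmeas_eq_rotate_dephased)
  with kraus_cptp_xmeas show "\<exists>ks. kraus_cptp ks \<and> indist_io 0 piS_RRD (SPRSP_sim ks)"
    by blast
qed

end
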